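(* Let $\|z\|\le1$ be fixed (independent of $W_0$), let $\epsilon>0$ with $\epsilon\le1/(dm)$, where $m\ge\ln(edm)$, and let $\delta\in(0,1)$. Then with probability at least $1-\delta$, \[ \sup_{\|x-z\|\le\epsilon,\ \|x\|\le1}\|\nabla f(x;W_0)-\nabla f(z;W_0)\|^2\le113\rho^2\sqrt{\frac{\ln(edm/\delta)}{m}}. \]
   Context: Network: width $m$, temperature $\rho>0$, $a_1,\dots,a_m\in\{\pm1\}$ (uniform random signs), $W_0\in\mathbb{R}^{m\times d}$ with i.i.d. $\mathcal N(0,1)$ entries. For $W$ with rows $w_j^\top$, $\nabla f(x;W)=\frac{\rho}{\sqrt m}\sum_{j=1}^ma_j\mathbf 1[w_j^\top x\ge0]e_jx^\top$. $\|\cdot\|$ is the Frobenius (Euclidean) norm. Probability is over $W_0$ (and $a$). *)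

theory Defs
  imports "HOL-Probability.Probability"
begin

definition gauss_vec :: "(real ^ 'd) measure" where
  "gauss_vec = density lborel (\<lambda>x. ennreal (\<Prod>i\<in>UNIV. std_normal_density (x $ i)))"

definition sign_measure :: "real measure" where
  "sign_measure = measure_pmf (pmf_of_set {-1, 1})"

definition init_measure :: "nat \<Rightarrow> ((nat \<Rightarrow> real ^ 'd) \<times> (nat \<Rightarrow> real)) measure" where
  "init_measure m = (PiM {..<m} (\<lambda>_. gauss_vec)) \<Otimes>\<^sub>M (PiM {..<m} (\<lambda>_. sign_measure))"

text \<open>Row j of the m x d matrix grad f(x;W) = rho/sqrt m * sum_j a_j 1[w_j.x >= 0] e_j x^T.\<close>
definition grad_row :: "real \<Rightarrow> nat \<Rightarrow> (nat \<Rightarrow> real) \<Rightarrow> (nat \<Rightarrow> real ^ 'd) \<Rightarrow> real ^ 'd \<Rightarrow> nat \<Rightarrow> real ^ 'd" where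
  "grad_row \<rho> m a W x j = (\<rho> / sqrt m * a j * (if W j \<bullet> x \<ge> 0 then 1 else 0)) *\<^sub>R x"

definition grad_diff_sq :: "real \<Rightarrow> nat \<Rightarrow> (nat \<Rightarrow> real) \<Rightarrow> (nat \<Rightarrow> real ^ 'd) \<Rightarrow> real ^ 'd \<Rightarrow> real ^ 'd \<Rightarrow> real" where
  "grad_diff_sq \<rho> m a W x z = (\<Sum>j<m. (norm (grad_row \<rho> m a W x j - grad_row \<rho> m a W z j))\<^sup>2)"

end

(*
  A row w_j of W_0 can switch its activation 1[w_j . x >= 0] between z and a point x with
  |x - z| <= eps only if |w_j . z| <= |w_j| eps.  Such a row contributes at most
  rho^2 (|z| + eps)^2 / m to |grad f(x) - grad f(z)|^2, every other row at most rho^2 eps^2 / m,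
  so everything hinges on the number N of these near-orthogonal rows.  For a Gaussian row,
  near-orthogonality forces either |w|^2 > d sqrt m (probability <= 1/sqrt m by Markov) or
  |w . z| <= (d sqrt m)^(1/2) eps, which has probability <= 1/sqrt m by anti-concentration of
  the coordinate b where z_b^2 >= |z|^2 / d, as soon as |z| >= m^(-1/4).  A Chernoff bound for
  the i.i.d. rows then gives N < 28 sqrt (m L) with probability >= 1 - delta, where
  L = ln (e d m / delta).  If |z| < m^(-1/4) or L > m, the crude bound rho^2 (|z| + eps)^2 is
  already small enough.  The signs a_j enter only through |a_j| <= 1.
*)
theory Submission
  imports Defs
begin

section \<open>Rows whose activation can switch\<close>

definition near_orthogonal :: "'a::real_inner \<Rightarrow> real \<Rightarrow> 'a set" where
  "near_orthogonal z \<epsilon> = {w. \<bar>w \<bullet> z\<bar> \<le> norm w * \<epsilon>}"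

definition flip_count :: "nat \<Rightarrow> 'a::real_inner \<Rightarrow> real \<Rightarrow> (nat \<Rightarrow> 'a) \<Rightarrow> real" where
  "flip_count m z \<epsilon> W = (\<Sum>j<m. indicator (near_orthogonal z \<epsilon>) (W j))"

lemma activation_change_imp_near_orthogonal:
  fixes w x z :: "'a::real_inner"
  assumes "norm (x - z) \<le> \<epsilon>" "(0 \<le> w \<bullet> x) \<noteq> (0 \<le> w \<bullet> z)"
  shows "w \<in> near_orthogonal z \<epsilon>"
proof -
  have "\<bar>w \<bullet> z\<bar> \<le> \<bar>w \<bullet> (x - z)\<bar>"
    using assms(2) by (auto simp: inner_diff_right)
  also have "\<dots> \<le> norm w * norm (x - z)"
    by (rule Cauchy_Schwarz_ineq2)
  also have "\<dots> \<le> norm w * \<epsilon>"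
    using assms(1) by (simp add: mult_left_mono)
  finally show ?thesis
    by (simp add: near_orthogonal_def)
qed

lemma norm_grad_row_diff_sq_le:
  fixes W :: "nat \<Rightarrow> real ^ 'd"
  assumes a: "\<bar>a j\<bar> \<le> 1" and xz: "norm (x - z) \<le> \<epsilon>"
  shows "(norm (grad_row \<rho> m a W x j - grad_row \<rho> m a W z j))\<^sup>2
    \<le> \<rho>\<^sup>2 / m * (if W j \<in> near_orthogonal z \<epsilon> then (norm z + \<epsilon>)\<^sup>2 else \<epsilon>\<^sup>2)"
proof -
  define \<sigma> :: "real ^ 'd \<Rightarrow> real" where "\<sigma> y = (if 0 \<le> W j \<bullet> y then 1 else 0)" for y
  define bd where "bd = (if W j \<in> near_orthogonal z \<epsilon> then norm z + \<epsilon> else \<epsilon>)"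
  have "0 \<le> \<epsilon>"
    using xz norm_ge_zero order_trans by blast
  have "norm x \<le> norm z + \<epsilon>"
    using xz norm_triangle_sub[of x z] by simp
  have "norm (\<sigma> x *\<^sub>R x - \<sigma> z *\<^sub>R z) \<le> bd"
  proof (cases "(0 \<le> W j \<bullet> x) = (0 \<le> W j \<bullet> z)")
    case True
    then have "norm (\<sigma> x *\<^sub>R x - \<sigma> z *\<^sub>R z) \<le> \<epsilon>"
      using xz \<open>0 \<le> \<epsilon>\<close> by (auto simp: \<sigma>_def)
    then show ?thesis
      unfolding bd_def by (auto intro: add_increasing)
  next
    case False
    then have "W j \<in> near_orthogonal z \<epsilon>"
      by (rule activation_change_imp_near_orthogonal[OF xz])
    then show ?thesis
      using False \<open>norm x \<le> norm z + \<epsilon>\<close> \<open>0 \<le> \<epsilon>\<close> by (auto simp: \<sigma>_def bd_def)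
  qed
  moreover have "\<bar>\<rho> / sqrt m * a j\<bar> \<le> \<bar>\<rho>\<bar> / sqrt m"
    using a by (simp add: abs_mult divide_right_mono mult_left_le)
  ultimately have "\<bar>\<rho> / sqrt m * a j\<bar> * norm (\<sigma> x *\<^sub>R x - \<sigma> z *\<^sub>R z) \<le> \<bar>\<rho>\<bar> / sqrt m * bd"
    by (intro mult_mono) auto
  moreover have "grad_row \<rho> m a W x j - grad_row \<rho> m a W z j
      = (\<rho> / sqrt m * a j) *\<^sub>R (\<sigma> x *\<^sub>R x - \<sigma> z *\<^sub>R z)"
    by (simp add: grad_row_def \<sigma>_def scaleR_diff_right)
  ultimately have "norm (grad_row \<rho> m a W x j - grad_row \<rho> m a W z j) \<le> \<bar>\<rho>\<bar> / sqrt m * bd"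
    by simp
  then have "(norm (grad_row \<rho> m a W x j - grad_row \<rho> m a W z j))\<^sup>2 \<le> (\<bar>\<rho>\<bar> / sqrt m * bd)\<^sup>2"
    by (intro power_mono) auto
  also have "\<dots> = \<rho>\<^sup>2 / m * bd\<^sup>2"
    by (simp add: power_mult_distrib power_divide)
  finally show ?thesis
    by (simp add: bd_def split: if_splits)
qed

lemma grad_diff_sq_le_flip_count:
  fixes W :: "nat \<Rightarrow> real ^ 'd"
  assumes "\<forall>j<m. \<bar>a j\<bar> \<le> 1" "norm (x - z) \<le> \<epsilon>"
  shows "grad_diff_sq \<rho> m a W x z \<le> \<rho>\<^sup>2 / m * (flip_count m z \<epsilon> W * (norm z + \<epsilon>)\<^sup>2 + m * \<epsilon>\<^sup>2)"
proof -
  have "grad_diff_sq \<rho> m a W x z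
      \<le> (\<Sum>j<m. \<rho>\<^sup>2 / m * (if W j \<in> near_orthogonal z \<epsilon> then (norm z + \<epsilon>)\<^sup>2 else \<epsilon>\<^sup>2))"
    unfolding grad_diff_sq_def using assms by (intro sum_mono norm_grad_row_diff_sq_le) auto
  also have "\<dots> \<le> (\<Sum>j<m. \<rho>\<^sup>2 / m * (indicator (near_orthogonal z \<epsilon>) (W j) * (norm z + \<epsilon>)\<^sup>2 + \<epsilon>\<^sup>2))"
    by (intro sum_mono mult_left_mono) (auto split: split_indicator)
  also have "\<dots> = \<rho>\<^sup>2 / m * (\<Sum>j<m. indicator (near_orthogonal z \<epsilon>) (W j) * (norm z + \<epsilon>)\<^sup>2 + \<epsilon>\<^sup>2)"
    by (rule sum_distrib_left[symmetric])
  also have "(\<Sum>j<m. indicator (near_orthogonal z \<epsilon>) (W j) * (norm z + \<epsilon>)\<^sup>2 + \<epsilon>\<^sup>2)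
      = flip_count m z \<epsilon> W * (norm z + \<epsilon>)\<^sup>2 + m * \<epsilon>\<^sup>2"
    by (simp add: flip_count_def sum.distrib sum_distrib_right)
  finally show ?thesis .
qed

lemma grad_diff_sq_le:
  fixes W :: "nat \<Rightarrow> real ^ 'd"
  assumes "\<forall>j<m. \<bar>a j\<bar> \<le> 1" "norm (x - z) \<le> \<epsilon>"
  shows "grad_diff_sq \<rho> m a W x z \<le> \<rho>\<^sup>2 * (norm z + \<epsilon>)\<^sup>2"
proof -
  have "0 \<le> \<epsilon>"
    using assms(2) norm_ge_zero order_trans by blast
  then have "grad_diff_sq \<rho> m a W x z \<le> (\<Sum>j<m. \<rho>\<^sup>2 / m * (norm z + \<epsilon>)\<^sup>2)"
    unfolding grad_diff_sq_def using assms
    by (intro sum_mono order.trans[OF norm_grad_row_diff_sq_le] mult_left_mono power_mono) auto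
  also have "\<dots> \<le> \<rho>\<^sup>2 * (norm z + \<epsilon>)\<^sup>2"
    by (cases "m = 0") simp_all
  finally show ?thesis .
qed

lemma square_le_sqrt_of_small_norm:
  fixes r \<epsilon> L :: real and m :: nat
  assumes "0 < m" "0 \<le> r" "r \<le> 1" "0 \<le> \<epsilon>" "\<epsilon> \<le> 1 / m" "1 \<le> L"
    and "m \<le> L \<or> r * sqrt (sqrt m) < 1"
  shows "(r + \<epsilon>)\<^sup>2 \<le> 4 * sqrt (L / m)"
  using assms(7)
proof
  assume "m \<le> L"
  have "1 / real m \<le> 1"
    using assms(1) by simp
  then have "\<epsilon> \<le> 1"
    using assms(5) by linarith
  then have "(r + \<epsilon>)\<^sup>2 \<le> 2\<^sup>2"
    using assms by (intro power_mono) auto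
  also have "\<dots> \<le> 4 * sqrt (L / m)"
    using \<open>m \<le> L\<close> assms(1) by simp
  finally show ?thesis .
next
  define q where "q = sqrt (sqrt m)"
  assume "r * sqrt (sqrt m) < 1"
  have "1 \<le> q" "q * q = sqrt m"
    using assms(1) by (simp_all add: q_def)
  have "q \<le> q * q"
    using \<open>1 \<le> q\<close> by (simp add: mult_le_cancel_left1)
  also have "\<dots> = sqrt m"
    by fact
  also have "\<dots> \<le> m"
    using assms(1) by (intro real_le_lsqrt) (simp_all add: power2_eq_square mult_le_cancel_left1)
  finally have "1 / m \<le> 1 / q"
    using \<open>1 \<le> q\<close> by (intro divide_left_mono) simp_all
  then have "\<epsilon> \<le> 1 / q"
    using assms(5) by linarith
  moreover have "r < 1 / q"
    using \<open>r * sqrt (sqrt m) < 1\<close> \<open>1 \<le> q\<close> by (simp add: q_def field_simps)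
  ultimately have "(r + \<epsilon>)\<^sup>2 \<le> (2 / q)\<^sup>2"
    using assms by (intro power_mono) auto
  also have "\<dots> = 4 * sqrt (1 / m)"
    using \<open>q * q = sqrt m\<close> by (simp add: power2_eq_square real_sqrt_divide)
  also have "\<dots> \<le> 4 * sqrt (L / m)"
    using assms by (simp add: divide_right_mono)
  finally show ?thesis .
qed

lemma count_bound_le_sqrt_log:
  fixes N r \<epsilon> L \<rho> :: real and m :: nat
  assumes "0 < m" "0 \<le> N" "N < 28 * sqrt (m * L)" "1 \<le> L" "0 \<le> r" "r \<le> 1" "0 \<le> \<epsilon>" "\<epsilon> \<le> 1 / m"
  shows "\<rho>\<^sup>2 / m * (N * (r + \<epsilon>)\<^sup>2 + m * \<epsilon>\<^sup>2) \<le> 113 * \<rho>\<^sup>2 * sqrt (L / m)"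
proof -
  define s where "s = sqrt (m * L)"
  have "1 * 1 \<le> real m * L"
    using assms(1,4) by (intro mult_mono) simp_all
  then have "1 \<le> s"
    by (simp add: s_def)
  have "m * \<epsilon> \<le> 1"
    using assms(1,8) by (simp add: field_simps)
  have "1 / real m \<le> 1"
    using assms(1) by simp
  then have "\<epsilon> \<le> 1"
    using assms(8) by linarith
  have "(m * \<epsilon>) * \<epsilon> \<le> 1 * 1"
    using \<open>m * \<epsilon> \<le> 1\<close> \<open>\<epsilon> \<le> 1\<close> assms(7) by (intro mult_mono) simp_all
  then have "m * \<epsilon>\<^sup>2 \<le> 1"
    by (simp add: power2_eq_square mult.assoc)
  moreover have "N * (r + \<epsilon>)\<^sup>2 \<le> 28 * s * 4"
  proof (rule mult_mono)
    show "(r + \<epsilon>)\<^sup>2 \<le> 4"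
      using assms \<open>\<epsilon> \<le> 1\<close> power_mono[of "r + \<epsilon>" 2 2] by simp
  qed (use assms in \<open>simp_all add: s_def\<close>)
  ultimately have "N * (r + \<epsilon>)\<^sup>2 + m * \<epsilon>\<^sup>2 \<le> 113 * s"
    using \<open>1 \<le> s\<close> by linarith
  then have "\<rho>\<^sup>2 / m * (N * (r + \<epsilon>)\<^sup>2 + m * \<epsilon>\<^sup>2) \<le> \<rho>\<^sup>2 / m * (113 * s)"
    by (intro mult_left_mono) simp_all
  also have "\<dots> = 113 * \<rho>\<^sup>2 * (s / m)"
    by simp
  also have "s / m = sqrt (L / m)"
    using assms(1) by (simp add: s_def real_sqrt_mult real_sqrt_divide field_simps)
  finally show ?thesis .
qed

lemma grad_diff_sq_le_sqrt_log_bound: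
  fixes W :: "nat \<Rightarrow> real ^ 'd" and L :: real
  assumes "0 < m" "norm z \<le> 1" "0 \<le> \<epsilon>" "\<epsilon> \<le> 1 / m" "1 \<le> L"
    and "\<forall>j<m. \<bar>a j\<bar> \<le> 1" "norm (x - z) \<le> \<epsilon>"
    and "m \<le> L \<or> norm z * sqrt (sqrt m) < 1 \<or> flip_count m z \<epsilon> W < 28 * sqrt (m * L)"
  shows "grad_diff_sq \<rho> m a W x z \<le> 113 * \<rho>\<^sup>2 * sqrt (L / m)"
proof (cases "m \<le> L \<or> norm z * sqrt (sqrt m) < 1")
  case True
  then have "(norm z + \<epsilon>)\<^sup>2 \<le> 4 * sqrt (L / m)"
    using assms by (intro square_le_sqrt_of_small_norm) simp_all
  moreover have "0 \<le> sqrt (L / m)"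
    using assms(5) by simp
  ultimately have "(norm z + \<epsilon>)\<^sup>2 \<le> 113 * sqrt (L / m)"
    by linarith
  then have "\<rho>\<^sup>2 * (norm z + \<epsilon>)\<^sup>2 \<le> \<rho>\<^sup>2 * (113 * sqrt (L / m))"
    by (intro mult_left_mono) simp_all
  then show ?thesis
    using grad_diff_sq_le[OF assms(6,7), of \<rho> W] by simp
next
  case False
  have "0 \<le> flip_count m z \<epsilon> W"
    by (simp add: flip_count_def sum_nonneg)
  then show ?thesis
    using False assms
    by (intro order.trans[OF grad_diff_sq_le_flip_count count_bound_le_sqrt_log]) auto
qed

section \<open>Standard Gaussian vectors\<close>

lemma prod_vec_nth_eq_prod_Basis:
  fixes g :: "real \<Rightarrow> 'b::comm_monoid_mult" and x :: "real ^ 'd"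
  shows "(\<Prod>i\<in>UNIV. g (x $ i)) = (\<Prod>b\<in>Basis. g (x \<bullet> b))"
proof -
  have "(Basis :: (real ^ 'd) set) = (\<lambda>i. axis i 1) ` UNIV"
    by (auto simp: Basis_vec_def)
  moreover have "inj (\<lambda>i::'d. axis i (1::real))"
    by (auto simp: inj_def axis_eq_axis)
  ultimately show ?thesis
    by (simp add: prod.reindex_cong[symmetric] cart_eq_inner_axis)
qed

lemma gauss_vec_density_Basis:
  "gauss_vec = density lborel (\<lambda>x::real ^ 'd. \<Prod>b\<in>Basis. ennreal (std_normal_density (x \<bullet> b)))"
  unfolding gauss_vec_def by (simp add: prod_vec_nth_eq_prod_Basis prod_ennreal)

lemma sets_gauss_vec [simp, measurable_cong]: "sets gauss_vec = sets borel"
  by (simp add: gauss_vec_def)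

lemma nn_integral_gauss_vec_prod:
  fixes h :: "real ^ 'd \<Rightarrow> real \<Rightarrow> ennreal"
  assumes [measurable]: "\<And>b. b \<in> Basis \<Longrightarrow> h b \<in> borel_measurable borel"
  shows "(\<integral>\<^sup>+x. (\<Prod>b\<in>Basis. h b (x \<bullet> b)) \<partial>(gauss_vec :: (real ^ 'd) measure)) =
    (\<Prod>b\<in>Basis. \<integral>\<^sup>+y. ennreal (std_normal_density y) * h b y \<partial>lborel)"
  unfolding gauss_vec_density_Basis
  by (simp add: nn_integral_density prod.distrib[symmetric]
      nn_integral_lborel_prod[of "\<lambda>b y. ennreal (std_normal_density y) * h b y"])

lemma nn_integral_std_normal_density: "(\<integral>\<^sup>+y. std_normal_density y \<partial>lborel) = 1"
  by (simp add: nn_integral_eq_integral)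

lemma nn_integral_std_normal_density_sq: "(\<integral>\<^sup>+y. std_normal_density y * y\<^sup>2 \<partial>lborel) = 1"
proof -
  have "(\<integral>\<^sup>+y. ennreal (std_normal_density y * y ^ (2 * 1)) \<partial>lborel) = fact 2 / (2 * fact 1)"
    using std_normal_moment_even[of 1]
    by (subst nn_integral_eq_integral) (auto simp: has_bochner_integral_iff)
  then show ?thesis
    by (simp add: ennreal_mult'')
qed

lemma prob_space_gauss_vec: "prob_space (gauss_vec :: (real ^ 'd) measure)"
proof
  have "(\<integral>\<^sup>+x. (\<Prod>b\<in>Basis. (\<lambda>_ _. 1) b (x \<bullet> b)) \<partial>(gauss_vec :: (real ^ 'd) measure))
      = (\<Prod>b\<in>(Basis :: (real ^ 'd) set). \<integral>\<^sup>+y. ennreal (std_normal_density y) * 1 \<partial>lborel)"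
    by (rule nn_integral_gauss_vec_prod) simp
  then show "emeasure (gauss_vec :: (real ^ 'd) measure) (space gauss_vec) = 1"
    by (simp add: nn_integral_std_normal_density)
qed

lemma nn_integral_gauss_vec_inner_Basis_sq:
  assumes "b\<^sub>0 \<in> Basis"
  shows "(\<integral>\<^sup>+w. (w \<bullet> b\<^sub>0)\<^sup>2 \<partial>(gauss_vec :: (real ^ 'd) measure)) = 1"
proof -
  let ?h = "\<lambda>b y. if b = b\<^sub>0 then ennreal (y\<^sup>2) else 1"
  have "(\<integral>\<^sup>+w. (w \<bullet> b\<^sub>0)\<^sup>2 \<partial>(gauss_vec :: (real ^ 'd) measure))
      = (\<integral>\<^sup>+w. (\<Prod>b\<in>Basis. ?h b (w \<bullet> b)) \<partial>gauss_vec)"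
    using assms by (simp only: prod.delta finite_Basis if_True)
  also have "\<dots> = (\<Prod>b\<in>(Basis :: (real ^ 'd) set). \<integral>\<^sup>+y. ennreal (std_normal_density y) * ?h b y \<partial>lborel)"
    by (rule nn_integral_gauss_vec_prod) simp
  also have "\<dots> = 1"
  proof (intro prod.neutral ballI)
    show "(\<integral>\<^sup>+y. ennreal (std_normal_density y) * ?h b y \<partial>lborel) = 1" for b
      by (cases "b = b\<^sub>0")
        (simp_all add: nn_integral_std_normal_density nn_integral_std_normal_density_sq
          flip: ennreal_mult)
  qed
  finally show ?thesis .
qed

lemma norm_sq_eq_sum_Basis: "(norm w)\<^sup>2 = (\<Sum>b\<in>Basis. (w \<bullet> b)\<^sup>2)"
  for w :: "'a::euclidean_space"
  unfolding power2_norm_eq_inner by (subst euclidean_inner) (simp add: power2_eq_square)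

lemma nn_integral_gauss_vec_norm_sq:
  "(\<integral>\<^sup>+w. (norm w)\<^sup>2 \<partial>(gauss_vec :: (real ^ 'd) measure)) = CARD('d)"
proof -
  have "(\<integral>\<^sup>+w. (norm w)\<^sup>2 \<partial>(gauss_vec :: (real ^ 'd) measure))
      = (\<integral>\<^sup>+w. (\<Sum>b\<in>Basis. ennreal ((w \<bullet> b)\<^sup>2)) \<partial>(gauss_vec :: (real ^ 'd) measure))"
    by (simp add: norm_sq_eq_sum_Basis)
  also have "\<dots> = (\<Sum>b\<in>(Basis :: (real ^ 'd) set). \<integral>\<^sup>+w. (w \<bullet> b)\<^sup>2 \<partial>gauss_vec)"
    by (rule nn_integral_sum) simp_all
  also have "\<dots> = CARD('d)"
    by (simp add: nn_integral_gauss_vec_inner_Basis_sq)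
  finally show ?thesis .
qed

lemma emeasure_gauss_vec_norm_sq_gt:
  assumes "R > 0"
  shows "emeasure (gauss_vec :: (real ^ 'd) measure) {w. R < (norm w)\<^sup>2} \<le> CARD('d) / R"
proof -
  have "emeasure (gauss_vec :: (real ^ 'd) measure) {w. R < (norm w)\<^sup>2}
      \<le> emeasure (gauss_vec :: (real ^ 'd) measure)
          {w \<in> UNIV. 1 \<le> ennreal (1 / R) * ennreal ((norm w)\<^sup>2)}"
  proof (rule emeasure_mono)
    show "{w. R < (norm w)\<^sup>2} \<subseteq> {w :: real ^ 'd \<in> UNIV. 1 \<le> ennreal (1 / R) * ennreal ((norm w)\<^sup>2)}"
      using assms by (auto simp flip: ennreal_mult simp: field_simps)
  qed measurable
  also have "\<dots> \<le> ennreal (1 / R) *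
      (\<integral>\<^sup>+w. ennreal ((norm w)\<^sup>2) * indicator UNIV w \<partial>(gauss_vec :: (real ^ 'd) measure))"
    by (rule nn_integral_Markov_inequality) simp_all
  also have "\<dots> = ennreal (CARD('d) / R)"
    using assms
    by (simp add: nn_integral_gauss_vec_norm_sq ennreal_mult'[symmetric] ennreal_of_nat_eq_real_of_nat)
  finally show ?thesis .
qed

lemma std_normal_density_le_half: "std_normal_density y \<le> 1 / 2"
proof -
  have "std_normal_density y \<le> 1 / sqrt (2 * pi)"
    unfolding std_normal_density_def by (intro mult_left_le) simp_all
  also have "\<dots> \<le> 1 / 2"
    using pi_gt3 real_sqrt_le_mono[of 4 "2 * pi"] by (intro divide_left_mono) simp_all
  finally show ?thesis .
qed

lemma nn_integral_std_normal_affine_le: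
  fixes c r s :: real
  assumes "c \<noteq> 0" "0 \<le> s"
  shows "(\<integral>\<^sup>+y. ennreal (std_normal_density y) * indicator {y. \<bar>c * y + r\<bar> \<le> s} y \<partial>lborel) \<le> s / \<bar>c\<bar>"
proof -
  let ?I = "{- r / c - s / \<bar>c\<bar> .. - r / c + s / \<bar>c\<bar>}"
  have "y \<in> ?I" if "\<bar>c * y + r\<bar> \<le> s" for y
  proof -
    have "c * y + r = c * (y + r / c)"
      using assms by (simp add: field_simps)
    then have "\<bar>c\<bar> * \<bar>y + r / c\<bar> \<le> s"
      using that by (simp add: abs_mult)
    then have "\<bar>y + r / c\<bar> \<le> s / \<bar>c\<bar>"
      using assms by (simp add: le_divide_eq mult.commute)
    then show ?thesis
      by (auto simp: abs_le_iff)
  qed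
  then have "(\<integral>\<^sup>+y. ennreal (std_normal_density y) * indicator {y. \<bar>c * y + r\<bar> \<le> s} y \<partial>lborel)
      \<le> (\<integral>\<^sup>+y. ennreal (1 / 2) * indicator ?I y \<partial>lborel)"
    using std_normal_density_le_half
    by (intro nn_integral_mono) (auto split: split_indicator simp del: ennreal_half)
  also have "\<dots> = ennreal (1 / 2) * ennreal (2 * s / \<bar>c\<bar>)"
    using assms by (simp add: nn_integral_cmult_indicator del: ennreal_half)
  also have "\<dots> = s / \<bar>c\<bar>"
    using assms by (simp del: ennreal_half flip: ennreal_mult)
  finally show ?thesis .
qed

lemma nn_integral_gauss_vec_coords:
  assumes [measurable]: "g \<in> borel_measurable borel"
  shows "(\<integral>\<^sup>+x. g x \<partial>(gauss_vec :: (real ^ 'd) measure)) =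
    (\<integral>\<^sup>+f. (\<Prod>b\<in>Basis. ennreal (std_normal_density (f b))) * g (\<Sum>b\<in>Basis. f b *\<^sub>R b)
      \<partial>(\<Pi>\<^sub>M b\<in>(Basis :: (real ^ 'd) set). lborel))"
proof -
  let ?T = "\<lambda>f. \<Sum>b\<in>(Basis :: (real ^ 'd) set). f b *\<^sub>R b"
  have coord: "?T f \<bullet> b = f b" if "b \<in> Basis" for f b
    using that by (simp add: inner_sum_left inner_Basis if_distrib sum.delta cong: if_cong)
  have "(\<integral>\<^sup>+x. g x \<partial>(gauss_vec :: (real ^ 'd) measure)) =
      (\<integral>\<^sup>+x. (\<Prod>b\<in>Basis. ennreal (std_normal_density (x \<bullet> b))) * g x \<partial>lborel)"
    unfolding gauss_vec_density_Basis by (simp add: nn_integral_density)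
  also have "\<dots> = (\<integral>\<^sup>+x. (\<Prod>b\<in>Basis. ennreal (std_normal_density (x \<bullet> b))) * g x
      \<partial>distr (\<Pi>\<^sub>M b\<in>Basis. lborel) borel ?T)"
    by (simp flip: lborel_eq)
  also have "\<dots> = (\<integral>\<^sup>+f. (\<Prod>b\<in>Basis. ennreal (std_normal_density (?T f \<bullet> b))) * g (?T f)
      \<partial>(\<Pi>\<^sub>M b\<in>Basis. lborel))"
    by (simp add: nn_integral_distr)
  finally show ?thesis
    by (simp add: coord cong: prod.cong)
qed

lemma nn_integral_gauss_vec_split_Basis:
  fixes g :: "real ^ 'd \<Rightarrow> ennreal"
  assumes b\<^sub>0: "b\<^sub>0 \<in> Basis" and [measurable]: "g \<in> borel_measurable borel"
  shows "(\<integral>\<^sup>+x. g x \<partial>(gauss_vec :: (real ^ 'd) measure)) =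
    (\<integral>\<^sup>+f. (\<Prod>b\<in>Basis - {b\<^sub>0}. ennreal (std_normal_density (f b))) *
       (\<integral>\<^sup>+y. std_normal_density y * g (y *\<^sub>R b\<^sub>0 + (\<Sum>b\<in>Basis - {b\<^sub>0}. f b *\<^sub>R b)) \<partial>lborel)
     \<partial>(\<Pi>\<^sub>M b\<in>Basis - {b\<^sub>0}. lborel))"
proof -
  interpret product_sigma_finite "\<lambda>_ :: real ^ 'd. lborel :: real measure"
    by unfold_locales
  define B where "B = (Basis :: (real ^ 'd) set) - {b\<^sub>0}"
  have Basis: "Basis = insert b\<^sub>0 B" and B: "finite B" "b\<^sub>0 \<notin> B"
    using b\<^sub>0 by (auto simp: B_def)
  let ?F = "\<lambda>f. (\<Prod>b\<in>Basis. ennreal (std_normal_density (f b))) * g (\<Sum>b\<in>Basis. f b *\<^sub>R b)"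
  have "(\<integral>\<^sup>+x. g x \<partial>(gauss_vec :: (real ^ 'd) measure)) = (\<integral>\<^sup>+f. ?F f \<partial>(\<Pi>\<^sub>M b\<in>Basis. lborel))"
    by (rule nn_integral_gauss_vec_coords) simp
  also have "\<dots> = (\<integral>\<^sup>+f. (\<integral>\<^sup>+y. ?F (f(b\<^sub>0 := y)) \<partial>lborel) \<partial>(\<Pi>\<^sub>M b\<in>B. lborel))"
    unfolding Basis by (rule product_nn_integral_insert[OF B]) (simp only: Basis[symmetric]; measurable)
  also have "\<dots> = (\<integral>\<^sup>+f. (\<Prod>b\<in>B. ennreal (std_normal_density (f b))) *
       (\<integral>\<^sup>+y. std_normal_density y * g (y *\<^sub>R b\<^sub>0 + (\<Sum>b\<in>B. f b *\<^sub>R b)) \<partial>lborel) \<partial>(\<Pi>\<^sub>M b\<in>B. lborel))"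
  proof (intro nn_integral_cong)
    fix f :: "real ^ 'd \<Rightarrow> real"
    have "\<forall>b\<in>B. (f(b\<^sub>0 := y)) b = f b" for y
      using B by auto
    then have "?F (f(b\<^sub>0 := y)) = (\<Prod>b\<in>B. ennreal (std_normal_density (f b))) *
        (std_normal_density y * g (y *\<^sub>R b\<^sub>0 + (\<Sum>b\<in>B. f b *\<^sub>R b)))" for y
      unfolding Basis using B
      by (simp add: mult_ac fun_upd_same del: fun_upd_apply cong: prod.cong sum.cong)
    then show "(\<integral>\<^sup>+y. ?F (f(b\<^sub>0 := y)) \<partial>lborel) = (\<Prod>b\<in>B. ennreal (std_normal_density (f b))) *
        (\<integral>\<^sup>+y. std_normal_density y * g (y *\<^sub>R b\<^sub>0 + (\<Sum>b\<in>B. f b *\<^sub>R b)) \<partial>lborel)"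
      by (simp add: nn_integral_cmult)
  qed
  finally show ?thesis
    unfolding B_def .
qed

lemma emeasure_gauss_vec_abs_inner_le:
  fixes z :: "real ^ 'd"
  assumes b\<^sub>0: "b\<^sub>0 \<in> Basis" and "z \<bullet> b\<^sub>0 \<noteq> 0" "0 \<le> s"
  shows "emeasure (gauss_vec :: (real ^ 'd) measure) {w. \<bar>w \<bullet> z\<bar> \<le> s} \<le> s / \<bar>z \<bullet> b\<^sub>0\<bar>"
proof -
  interpret product_sigma_finite "\<lambda>_ :: real ^ 'd. lborel :: real measure"
    by unfold_locales
  define B where "B = (Basis :: (real ^ 'd) set) - {b\<^sub>0}"
  define c where "c = b\<^sub>0 \<bullet> z"
  let ?S = "{w :: real ^ 'd. \<bar>w \<bullet> z\<bar> \<le> s}"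
  let ?v = "\<lambda>f. \<Sum>b\<in>B. f b *\<^sub>R b"
  have "emeasure (gauss_vec :: (real ^ 'd) measure) ?S = (\<integral>\<^sup>+x. indicator ?S x \<partial>gauss_vec)"
    by simp
  also have "\<dots> = (\<integral>\<^sup>+f. (\<Prod>b\<in>B. ennreal (std_normal_density (f b))) *
      (\<integral>\<^sup>+y. ennreal (std_normal_density y) * indicator ?S (y *\<^sub>R b\<^sub>0 + ?v f) \<partial>lborel)
      \<partial>(\<Pi>\<^sub>M b\<in>B. lborel))"
    unfolding B_def by (rule nn_integral_gauss_vec_split_Basis[OF b\<^sub>0]) simp
  also have "\<dots> \<le> (\<integral>\<^sup>+f. (\<Prod>b\<in>B. ennreal (std_normal_density (f b))) * ennreal (s / \<bar>c\<bar>)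
      \<partial>(\<Pi>\<^sub>M b\<in>B. lborel))"
  proof (intro nn_integral_mono mult_left_mono)
    fix f :: "real ^ 'd \<Rightarrow> real"
    have "(\<integral>\<^sup>+y. ennreal (std_normal_density y) * indicator ?S (y *\<^sub>R b\<^sub>0 + ?v f) \<partial>lborel)
        = (\<integral>\<^sup>+y. ennreal (std_normal_density y) * indicator {y. \<bar>c * y + ?v f \<bullet> z\<bar> \<le> s} y \<partial>lborel)"
      by (intro nn_integral_cong) (simp add: inner_add_left c_def mult.commute split: split_indicator)
    also have "\<dots> \<le> s / \<bar>c\<bar>"
      using assms by (intro nn_integral_std_normal_affine_le) (simp_all add: c_def inner_commute)
    finally show "(\<integral>\<^sup>+y. ennreal (std_normal_density y) * indicator ?S (y *\<^sub>R b\<^sub>0 + ?v f) \<partial>lborel)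
        \<le> s / \<bar>c\<bar>" .
  qed simp
  also have "\<dots> = (\<Prod>b\<in>B. \<integral>\<^sup>+y. std_normal_density y \<partial>lborel) * ennreal (s / \<bar>c\<bar>)"
    by (subst nn_integral_multc)
      (simp_all add: B_def product_nn_integral_prod[of _ "\<lambda>_ y. ennreal (std_normal_density y)"])
  also have "\<dots> = s / \<bar>c\<bar>"
    by (simp add: nn_integral_std_normal_density)
  finally show ?thesis
    by (simp add: c_def inner_commute)
qed

lemma sets_near_orthogonal [measurable]:
  "near_orthogonal (z :: 'a::euclidean_space) \<epsilon> \<in> sets borel"
  unfolding near_orthogonal_def by measurable

lemma exists_Basis_inner_sq_ge:
  fixes z :: "'a::euclidean_space"
  shows "\<exists>b\<in>Basis. (norm z)\<^sup>2 \<le> DIM('a) * (z \<bullet> b)\<^sup>2"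
proof (rule ccontr)
  assume "\<not> ?thesis"
  then have "(z \<bullet> b)\<^sup>2 < (norm z)\<^sup>2 / DIM('a)" if "b \<in> Basis" for b
    using that by (auto simp: field_simps)
  then have "(\<Sum>b\<in>Basis. (z \<bullet> b)\<^sup>2) < (\<Sum>b\<in>(Basis :: 'a set). (norm z)\<^sup>2 / DIM('a))"
    by (intro sum_strict_mono) auto
  then show False
    by (simp add: norm_sq_eq_sum_Basis)
qed

lemma emeasure_gauss_vec_near_orthogonal_le:
  fixes z :: "real ^ 'd" and q \<epsilon> :: real
  assumes q: "0 < q" and z: "1 \<le> norm z * sqrt q" and "0 \<le> \<epsilon>" "\<epsilon> * CARD('d) * q\<^sup>2 \<le> 1"
  shows "emeasure (gauss_vec :: (real ^ 'd) measure) (near_orthogonal z \<epsilon>) \<le> 2 / q"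
proof -
  define R where "R = CARD('d) * q"
  define t where "t = sqrt R"
  have t: "0 < t" "t\<^sup>2 = R"
    using q by (simp_all add: t_def R_def)
  obtain b\<^sub>0 where b\<^sub>0: "b\<^sub>0 \<in> Basis" and "(norm z)\<^sup>2 \<le> CARD('d) * (z \<bullet> b\<^sub>0)\<^sup>2"
    using exists_Basis_inner_sq_ge[of z] by auto
  then have "(norm z)\<^sup>2 \<le> (sqrt CARD('d) * \<bar>z \<bullet> b\<^sub>0\<bar>)\<^sup>2"
    by (simp add: power_mult_distrib)
  then have "norm z \<le> sqrt CARD('d) * \<bar>z \<bullet> b\<^sub>0\<bar>"
    by (rule power2_le_imp_le) simp
  then have "norm z * sqrt q \<le> sqrt CARD('d) * \<bar>z \<bullet> b\<^sub>0\<bar> * sqrt q"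
    using q by (intro mult_right_mono) simp_all
  also have "\<dots> = \<bar>z \<bullet> b\<^sub>0\<bar> * t"
    by (simp add: t_def R_def real_sqrt_mult)
  finally have zb: "1 \<le> \<bar>z \<bullet> b\<^sub>0\<bar> * t"
    using z by linarith
  have "t * \<epsilon> * q = (\<epsilon> * CARD('d) * q\<^sup>2) / t"
    using t by (simp add: R_def field_simps power2_eq_square)
  also have "\<dots> \<le> 1 / t"
    using assms(4) t by (simp add: divide_right_mono)
  also have "\<dots> \<le> \<bar>z \<bullet> b\<^sub>0\<bar>"
    using zb t by (simp add: divide_le_eq)
  finally have t_\<epsilon>: "t * \<epsilon> * q \<le> \<bar>z \<bullet> b\<^sub>0\<bar>" .
  have "near_orthogonal z \<epsilon> \<subseteq> {w. R < (norm w)\<^sup>2} \<union> {w. \<bar>w \<bullet> z\<bar> \<le> t * \<epsilon>}"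
  proof
    fix w assume w: "w \<in> near_orthogonal z \<epsilon>"
    show "w \<in> {w. R < (norm w)\<^sup>2} \<union> {w. \<bar>w \<bullet> z\<bar> \<le> t * \<epsilon>}"
    proof (cases "R < (norm w)\<^sup>2")
      case False
      then have "norm w \<le> t"
        unfolding t_def by (simp add: real_le_rsqrt)
      then show ?thesis
        using w \<open>0 \<le> \<epsilon>\<close> by (auto simp: near_orthogonal_def intro: order_trans mult_right_mono)
    qed simp
  qed
  then have "emeasure (gauss_vec :: (real ^ 'd) measure) (near_orthogonal z \<epsilon>)
      \<le> emeasure gauss_vec {w :: real ^ 'd. R < (norm w)\<^sup>2} + emeasure gauss_vec {w. \<bar>w \<bullet> z\<bar> \<le> t * \<epsilon>}"
    by (intro order.trans[OF emeasure_mono emeasure_subadditive]) measurable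
  also have "\<dots> \<le> ennreal (CARD('d) / R) + ennreal (t * \<epsilon> / \<bar>z \<bullet> b\<^sub>0\<bar>)"
    using t zb b\<^sub>0 \<open>0 \<le> \<epsilon>\<close>
    by (intro add_mono emeasure_gauss_vec_norm_sq_gt emeasure_gauss_vec_abs_inner_le) auto
  also have "\<dots> \<le> ennreal (1 / q) + ennreal (1 / q)"
  proof (intro add_mono ennreal_leI)
    show "CARD('d) / R \<le> 1 / q"
      using q by (simp add: R_def)
    have "0 < \<bar>z \<bullet> b\<^sub>0\<bar>"
      using zb by (cases "z \<bullet> b\<^sub>0 = 0") auto
    then show "t * \<epsilon> / \<bar>z \<bullet> b\<^sub>0\<bar> \<le> 1 / q"
      using q t_\<epsilon> by (simp add: field_simps)
  qed
  also have "\<dots> = 2 / q"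
    using q by (simp flip: ennreal_plus)
  finally show ?thesis .
qed

section \<open>Counting near-orthogonal rows\<close>

lemma (in prob_space) nn_integral_exp_indicator_le:
  assumes "B \<in> events" "emeasure M B \<le> p" "0 \<le> p"
  shows "(\<integral>\<^sup>+x. exp (indicator B x) \<partial>M) \<le> exp (2 * p)"
proof -
  have "ennreal (exp (indicator B x)) = 1 + ennreal (exp 1 - 1) * indicator B x" for x
    using ennreal_plus[of 1 "exp 1 - 1"] by (simp split: split_indicator)
  then have "(\<integral>\<^sup>+x. exp (indicator B x) \<partial>M) = 1 + ennreal (exp 1 - 1) * emeasure M B"
    using assms by (simp add: nn_integral_add nn_integral_cmult_indicator emeasure_space_1)
  also have "\<dots> \<le> 1 + ennreal 2 * ennreal p"
    using assms exp_le by (intro add_mono mult_mono ennreal_leI) simp_all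
  also have "\<dots> = ennreal (1 + 2 * p)"
    using assms by (simp add: ennreal_plus ennreal_mult)
  also have "\<dots> \<le> exp (2 * p)"
    by (intro ennreal_leI) (metis add.commute exp_ge_add_one_self)
  finally show ?thesis .
qed

lemma emeasure_PiM_count_ge_le:
  fixes M :: "'a measure" and B :: "'a set" and m :: nat and p k :: real
  assumes M: "prob_space M" and B[measurable]: "B \<in> sets M" and p: "emeasure M B \<le> p" "0 \<le> p"
  shows "emeasure (\<Pi>\<^sub>M j\<in>{..<m}. M) {W \<in> space (\<Pi>\<^sub>M j\<in>{..<m}. M). k \<le> (\<Sum>j<m. indicator B (W j))}
    \<le> exp (2 * p * m - k)"
proof -
  interpret product_sigma_finite "\<lambda>_. M"
    using M by (simp add: product_sigma_finite_def prob_space_imp_sigma_finite)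
  let ?P = "\<Pi>\<^sub>M j\<in>{..<m}. M"
  have "emeasure ?P {W \<in> space ?P. k \<le> (\<Sum>j<m. indicator B (W j))}
      \<le> exp (- 1 * k) * (\<integral>\<^sup>+W. exp (1 * (\<Sum>j<m. indicator B (W j))) * indicator (space ?P) W \<partial>?P)"
    by (rule Chernoff_ineq_nn_integral_ge) simp_all
  also have "(\<integral>\<^sup>+W. exp (1 * (\<Sum>j<m. indicator B (W j))) * indicator (space ?P) W \<partial>?P)
      = (\<integral>\<^sup>+W. (\<Prod>j<m. ennreal (exp (indicator B (W j)))) \<partial>?P)"
    by (intro nn_integral_cong) (simp add: exp_sum prod_ennreal)
  also have "\<dots> = (\<integral>\<^sup>+x. exp (indicator B x) \<partial>M) ^ m"
    by (subst product_nn_integral_prod[where f = "\<lambda>_ x. ennreal (exp (indicator B x))"]) simp_all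
  also have "\<dots> \<le> ennreal (exp (2 * p)) ^ m"
    using prob_space.nn_integral_exp_indicator_le[OF M B p] by (rule power_mono) simp
  also have "ennreal (exp (- 1 * k)) * ennreal (exp (2 * p)) ^ m = exp (2 * p * m - k)"
    by (simp add: ennreal_power ennreal_mult'[symmetric] exp_of_nat_mult[symmetric]
        exp_add[symmetric] mult_ac)
  finally show ?thesis
    by (simp add: mult_left_mono)
qed

lemma exp_Chernoff_exponent_le:
  fixes L \<delta> :: real and m :: nat
  assumes "1 \<le> L" "L \<le> m" "ln (1 / \<delta>) \<le> L" "0 < \<delta>"
  shows "exp (2 * (2 / sqrt m) * m - 28 * sqrt (m * L)) \<le> \<delta>"
proof -
  have "real m * 1 \<le> m * L"
    using assms by (intro mult_left_mono) simp_all
  then have "sqrt m \<le> sqrt (m * L)"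
    by (intro real_sqrt_le_mono) simp
  have "L * L \<le> m * L"
    using assms by (intro mult_right_mono) simp_all
  then have "L \<le> sqrt (m * L)"
    by (intro real_le_rsqrt) (simp add: power2_eq_square)
  moreover have "2 * (2 / sqrt m) * m = 4 * (m / sqrt m)"
    by simp
  moreover have "m / sqrt m = sqrt m"
    by (rule real_div_sqrt) simp
  moreover have "- L \<le> ln \<delta>"
    using assms by (simp add: ln_div)
  ultimately have "2 * (2 / sqrt m) * m - 28 * sqrt (m * L) \<le> ln \<delta>"
    using \<open>sqrt m \<le> sqrt (m * L)\<close> assms(1) by linarith
  then show ?thesis
    using assms(4) by (metis exp_le_cancel_iff exp_ln)
qed

lemma measure_flip_count_ge_le:
  fixes z :: "real ^ 'd" and m :: nat and \<epsilon> L \<delta> :: real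
  assumes m: "0 < m" and z: "1 \<le> norm z * sqrt (sqrt m)"
    and \<epsilon>: "0 \<le> \<epsilon>" "\<epsilon> \<le> 1 / (CARD('d) * m)"
    and L: "1 \<le> L" "L \<le> m" "ln (1 / \<delta>) \<le> L" and \<delta>: "0 < \<delta>"
  shows "measure (\<Pi>\<^sub>M j\<in>{..<m}. gauss_vec)
    {W \<in> space (\<Pi>\<^sub>M j\<in>{..<m}. gauss_vec). 28 * sqrt (m * L) \<le> flip_count m z \<epsilon> W} \<le> \<delta>"
proof -
  let ?P = "\<Pi>\<^sub>M j\<in>{..<m}. (gauss_vec :: (real ^ 'd) measure)"
  interpret prob_space ?P
    by (intro prob_space_PiM prob_space_gauss_vec)
  have "\<epsilon> * CARD('d) * (sqrt m)\<^sup>2 \<le> 1"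
    using \<epsilon> m by (simp add: field_simps)
  then have "emeasure (gauss_vec :: (real ^ 'd) measure) (near_orthogonal z \<epsilon>) \<le> 2 / sqrt m"
    using m z \<epsilon> by (intro emeasure_gauss_vec_near_orthogonal_le) (simp_all add: real_sqrt_mult)
  then have "emeasure ?P {W \<in> space ?P. 28 * sqrt (m * L) \<le> flip_count m z \<epsilon> W}
      \<le> exp (2 * (2 / sqrt m) * m - 28 * sqrt (m * L))"
    unfolding flip_count_def by (intro emeasure_PiM_count_ge_le prob_space_gauss_vec) simp_all
  also have "\<dots> \<le> \<delta>"
    using L \<delta> by (intro ennreal_leI exp_Chernoff_exponent_le)
  finally show ?thesis
    using \<delta> by (simp add: emeasure_eq_measure)
qed

lemma exists_event_flip_count_lt:
  fixes z :: "real ^ 'd" and m :: nat and \<epsilon> L \<delta> :: real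
  assumes "0 < m" "0 \<le> \<epsilon>" "\<epsilon> \<le> 1 / (CARD('d) * m)" "1 \<le> L" "ln (1 / \<delta>) \<le> L" "0 < \<delta>"
  shows "\<exists>E \<in> sets (\<Pi>\<^sub>M j\<in>{..<m}. gauss_vec). 1 - \<delta> \<le> measure (\<Pi>\<^sub>M j\<in>{..<m}. gauss_vec) E \<and>
    (\<forall>W\<in>E. m \<le> L \<or> norm z * sqrt (sqrt m) < 1 \<or> flip_count m z \<epsilon> W < 28 * sqrt (m * L))"
proof -
  let ?P = "\<Pi>\<^sub>M j\<in>{..<m}. (gauss_vec :: (real ^ 'd) measure)"
  interpret prob_space ?P
    by (intro prob_space_PiM prob_space_gauss_vec)
  show ?thesis
  proof (cases "m \<le> L \<or> norm z * sqrt (sqrt m) < 1")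
    case True
    then show ?thesis
      using assms by (intro bexI[of _ "space ?P"]) (auto simp: prob_space)
  next
    case False
    let ?E = "{W \<in> space ?P. flip_count m z \<epsilon> W < 28 * sqrt (m * L)}"
    have E: "?E \<in> events"
      unfolding flip_count_def by measurable
    have "space ?P - ?E = {W \<in> space ?P. 28 * sqrt (m * L) \<le> flip_count m z \<epsilon> W}"
      by auto
    then have "prob (space ?P - ?E) \<le> \<delta>"
      using False assms by (simp add: measure_flip_count_ge_le)
    then show ?thesis
      using E by (intro bexI[of _ ?E]) (auto simp: prob_compl)
  qed
qed

lemma init_measure_event_of_weights_event:
  fixes E :: "(nat \<Rightarrow> real ^ 'd) set"
  assumes E: "E \<in> sets (\<Pi>\<^sub>M j\<in>{..<m}. gauss_vec)" "1 - \<delta> \<le> measure (\<Pi>\<^sub>M j\<in>{..<m}. gauss_vec) E"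
    and Q: "\<And>W a. W \<in> E \<Longrightarrow> \<forall>j<m. \<bar>a j\<bar> \<le> 1 \<Longrightarrow> Q W a"
  shows "\<exists>A \<in> sets (init_measure m). measure (init_measure m) A \<ge> 1 - \<delta> \<and> (\<forall>(W, a) \<in> A. Q W a)"
proof -
  let ?PW = "\<Pi>\<^sub>M j\<in>{..<m}. (gauss_vec :: (real ^ 'd) measure)"
  let ?PA = "\<Pi>\<^sub>M j\<in>{..<m}. sign_measure"
  let ?signs = "{..<m} \<rightarrow>\<^sub>E {-1, 1 :: real}"
  have sign: "prob_space sign_measure"
    unfolding sign_measure_def by (rule prob_space_measure_pmf)
  interpret PW: prob_space ?PW
    by (intro prob_space_PiM prob_space_gauss_vec)
  interpret PA: product_prob_space "\<lambda>_. sign_measure" "{..<m}"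
    using sign by (simp add: product_prob_space_def product_prob_space_axioms_def
        product_sigma_finite_def prob_space_imp_sigma_finite)
  interpret P: prob_space "init_measure m :: ((nat \<Rightarrow> real ^ 'd) \<times> (nat \<Rightarrow> real)) measure"
    unfolding init_measure_def by (intro prob_space_pair PW.prob_space_axioms PA.prob_space_axioms)
  have signs: "?signs \<in> sets ?PA"
    by (rule sets_PiM_I_finite) (simp_all add: sign_measure_def)
  have "emeasure ?PA ?signs = (\<Prod>j<m. emeasure sign_measure {-1, 1})"
    by (rule PA.emeasure_PiM) (simp_all add: sign_measure_def)
  also have "\<dots> = 1"
    by (simp add: sign_measure_def emeasure_pmf_of_set)
  finally have "emeasure (init_measure m) (E \<times> ?signs) = emeasure ?PW E"
    unfolding init_measure_def using E signs by (simp add: PA.emeasure_pair_measure_Times)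
  then have "measure (init_measure m) (E \<times> ?signs) = measure ?PW E"
    by (simp add: P.emeasure_eq_measure PW.emeasure_eq_measure)
  moreover have "E \<times> ?signs \<in> sets (init_measure m)"
    unfolding init_measure_def using E signs by simp
  moreover have "\<forall>(W, a) \<in> E \<times> ?signs. Q W a"
    using Q by (force simp: PiE_iff)
  ultimately show ?thesis
    using E by (intro bexI[of _ "E \<times> ?signs"]) auto
qed

lemma ln_exp_mul_div_ge:
  fixes a b \<delta> :: real
  assumes "1 \<le> a" "1 \<le> b" "0 < \<delta>" "\<delta> < 1"
  shows "1 \<le> ln (exp 1 * a * b / \<delta>)" "ln (1 / \<delta>) \<le> ln (exp 1 * a * b / \<delta>)"
proof -
  have "1 \<le> a * b"
    using assms mult_mono[of 1 a 1 b] by simp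
  then have "0 \<le> ln (a * b)" "0 \<le> ln (1 / \<delta>)"
    using assms by simp_all
  moreover have "ln (exp 1 * a * b / \<delta>) = 1 + ln (a * b) + ln (1 / \<delta>)"
    using assms by (simp add: ln_mult ln_div)
  ultimately show "1 \<le> ln (exp 1 * a * b / \<delta>)" "ln (1 / \<delta>) \<le> ln (exp 1 * a * b / \<delta>)"
    by linarith+
qed

theorem lemmaA5:
  fixes z :: "real ^ 'd" and m :: nat and \<rho> \<epsilon> \<delta> :: real
  assumes "\<rho> > 0" and "m > 0"
    and "m \<ge> ln (exp 1 * CARD('d) * m)"
    and "norm z \<le> 1"
    and "\<epsilon> > 0" and "\<epsilon> \<le> 1 / (CARD('d) * m)"
    and "0 < \<delta>" and "\<delta> < 1"
  shows "\<exists>A \<in> sets (init_measure m).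
           measure (init_measure m) A \<ge> 1 - \<delta> \<and>
           (\<forall>(W, a) \<in> A. \<forall>x :: real ^ 'd. norm (x - z) \<le> \<epsilon> \<and> norm x \<le> 1 \<longrightarrow>
              grad_diff_sq \<rho> m a W x z \<le> 113 * \<rho>\<^sup>2 * sqrt (ln (exp 1 * CARD('d) * m / \<delta>) / m))"
proof -
  define L where "L = ln (exp 1 * CARD('d) * m / \<delta>)"
  have "1 \<le> real CARD('d)" "1 \<le> real m"
    using \<open>m > 0\<close> by (simp_all add: Suc_le_eq)
  then have L: "1 \<le> L" "ln (1 / \<delta>) \<le> L"
    unfolding L_def using \<open>0 < \<delta>\<close> \<open>\<delta> < 1\<close> by (intro ln_exp_mul_div_ge; simp)+
  have "1 / (real CARD('d) * m) \<le> 1 / m"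
    using \<open>1 \<le> real CARD('d)\<close> \<open>m > 0\<close> by (intro divide_left_mono) simp_all
  then have "\<epsilon> \<le> 1 / m"
    using assms(6) by simp
  obtain E where E: "E \<in> sets (\<Pi>\<^sub>M j\<in>{..<m}. gauss_vec)" "1 - \<delta> \<le> measure (\<Pi>\<^sub>M j\<in>{..<m}. gauss_vec) E"
    and good: "\<forall>W\<in>E. m \<le> L \<or> norm z * sqrt (sqrt m) < 1 \<or> flip_count m z \<epsilon> W < 28 * sqrt (m * L)"
    using exists_event_flip_count_lt[of m \<epsilon> L \<delta> z] assms L by auto
  have "grad_diff_sq \<rho> m a W x z \<le> 113 * \<rho>\<^sup>2 * sqrt (L / m)"
    if "W \<in> E" "\<forall>j<m. \<bar>a j\<bar> \<le> 1" "norm (x - z) \<le> \<epsilon>" for W a x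
    using that good assms L \<open>\<epsilon> \<le> 1 / m\<close> by (intro grad_diff_sq_le_sqrt_log_bound) auto
  then show ?thesis
    unfolding L_def by (intro init_measure_event_of_weights_event[OF E]) auto
qed

end
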